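(* Let $f:\mathcal X\times\mathcal Y\to\{0,1\}$, let $\mu:\mathcal X\times\mathcal Y\to[0,1]$ be a (not necessarily normalized) product function $\mu(x,y)=\mu_X(x)\mu_Y(y)$, let $\epsilon,\delta\in(0,1)$, let $\langle w_R\rangle$ be an optimal solution of the LP defining $\mathrm{srec}^{1,\mu}_{\epsilon,\delta}(f)$ and $D=\sum_R w_R>0$ its value. Let $X_0\subseteq\mathcal X$, $Y_0\subseteq\mathcal Y$, $X_1=\mathcal X\setminus X_0$, $Y_1=\mathcal Y\setminus Y_0$, $R^{(ij)}=X_i\times Y_j$, and assume $\mu(R^{(ij)})>0$ for all $i,j\in\{0,1\}$ and $\mu_1(R^{(00)})\le\sqrt\delta\,\mu_0(R^{(00)})$. Let $\mu^{(ij)}$ be $\mu$ restricted to $R^{(ij)}$ (zero outside). For $i,j$ with $\mu_1(R^{(ij)})>0$ let $$\epsilon^{(ij)}=1-\frac{\sum_{(x,y)\in f^{-1}(1)\cap R^{(ij)}}\mu(x,y)\sum_{R\ni(x,y)}w_R}{\mu_1(R^{(ij)})}.$$ Then there exists $(ij)\in\{(01),(10)\}$ such that either (a) $2\mu^{(ij)}(f^{-1}(1))\le\mu^{(ij)}(f^{-1}(0))$, or (b) $\mathrm{srec}^{1,\mu^{(ij)}}_{\epsilon^{(ij)}+30\delta^{1/4},\,\delta}(f)\le0.9D$.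
   Context: A rectangle is $A\times B$ with $A\subseteq\mathcal X,B\subseteq\mathcal Y$. For nonnegative $\mu$: $\mu_z(R)=\mu(R\cap f^{-1}(z))$, $\mu_z=\mu_z(\mathcal X\times\mathcal Y)$. $\mathrm{srec}^{z,\mu}_{\epsilon,\delta}(f)$ is the optimal value of: minimize $\sum_R w_R$ over $w_R\ge0$ (one per rectangle) subject to $\sum_{(x,y)\in f^{-1}(z)}\mu(x,y)\sum_{R\ni(x,y)}w_R\ge(1-\epsilon)\mu_z$; $\sum_{R\ni(x,y)}w_R\le\delta$ for all $(x,y)\notin f^{-1}(z)$; $\sum_{R\ni(x,y)}w_R\le1$ for all $(x,y)$. (For $\epsilon\ge1$ the covering constraint is vacuous.) *)

theory Defs
  imports Complex_Main
begin

text \<open>Rectangles A \<times> B are represented by pairs (A, B) of sets; a weight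
  vector assigns a real weight to every rectangle. Domains are finite types.\<close>

definition rect :: "'x set \<times> 'y set \<Rightarrow> ('x \<times> 'y) set" where
  "rect R = fst R \<times> snd R"

definition cov :: "('x::finite set \<times> 'y::finite set \<Rightarrow> real) \<Rightarrow> 'x \<times> 'y \<Rightarrow> real" where
  "cov w p = (\<Sum>R\<in>{R. p \<in> rect R}. w R)"

definition muz :: "('x::finite \<times> 'y::finite \<Rightarrow> real) \<Rightarrow> ('x \<times> 'y \<Rightarrow> nat) \<Rightarrow> nat \<Rightarrow> ('x \<times> 'y) set \<Rightarrow> real" where
  "muz \<mu> f z S = (\<Sum>p\<in>S \<inter> f -` {z}. \<mu> p)"

definition msr :: "('x::finite \<times> 'y::finite \<Rightarrow> real) \<Rightarrow> ('x \<times> 'y) set \<Rightarrow> real" where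
  "msr \<mu> S = (\<Sum>p\<in>S. \<mu> p)"

definition restr :: "('x \<times> 'y \<Rightarrow> real) \<Rightarrow> ('x \<times> 'y) set \<Rightarrow> 'x \<times> 'y \<Rightarrow> real" where
  "restr \<mu> S = (\<lambda>p. if p \<in> S then \<mu> p else 0)"

definition srec_feasible :: "('x::finite \<times> 'y::finite \<Rightarrow> nat) \<Rightarrow> nat \<Rightarrow> ('x \<times> 'y \<Rightarrow> real)
    \<Rightarrow> real \<Rightarrow> real \<Rightarrow> ('x set \<times> 'y set \<Rightarrow> real) \<Rightarrow> bool" where
  "srec_feasible f z \<mu> \<epsilon> \<delta> w \<longleftrightarrow>
     (\<forall>R. 0 \<le> w R) \<and>
     (\<Sum>p\<in>f -` {z}. \<mu> p * cov w p) \<ge> (1 - \<epsilon>) * muz \<mu> f z UNIV \<and>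
     (\<forall>p. f p \<noteq> z \<longrightarrow> cov w p \<le> \<delta>) \<and>
     (\<forall>p. cov w p \<le> 1)"

definition srec :: "('x::finite \<times> 'y::finite \<Rightarrow> nat) \<Rightarrow> nat \<Rightarrow> ('x \<times> 'y \<Rightarrow> real)
    \<Rightarrow> real \<Rightarrow> real \<Rightarrow> real" where
  "srec f z \<mu> \<epsilon> \<delta> = Inf {(\<Sum>R\<in>UNIV. w R) | w. srec_feasible f z \<mu> \<epsilon> \<delta> w}"

definition blk :: "'x set \<Rightarrow> 'y set \<Rightarrow> nat \<Rightarrow> nat \<Rightarrow> ('x \<times> 'y) set" where
  "blk X0 Y0 i j = (if i = 0 then X0 else - X0) \<times> (if j = 0 then Y0 else - Y0)"

text \<open>epsilon^{(ij)} for the block S (meaningful when mu_1(S) > 0).\<close>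
definition eps_blk :: "('x::finite \<times> 'y::finite \<Rightarrow> nat) \<Rightarrow> ('x \<times> 'y \<Rightarrow> real)
    \<Rightarrow> ('x set \<times> 'y set \<Rightarrow> real) \<Rightarrow> ('x \<times> 'y) set \<Rightarrow> real" where
  "eps_blk f \<mu> w S = 1 - (\<Sum>p\<in>f -` {1} \<inter> S. \<mu> p * cov w p) / muz \<mu> f 1 S"

end

theory Submission
  imports Defs
begin

text \<open>For a product measure, the masses that a rectangle R puts on the four blocks satisfy
  \<open>\<mu>(R \<inter> R\<^sup>0\<^sup>0) \<mu>(R \<inter> R\<^sup>1\<^sup>1) = \<mu>(R \<inter> R\<^sup>0\<^sup>1) \<mu>(R \<inter> R\<^sup>1\<^sup>0)\<close>, and the same holds for the blocks
  themselves. After normalising each block mass by the mass of the block, AM-GM therefore bounds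
  the smaller of the two off-diagonal fractions of R by \<open>(\<gamma>/u + u \<eta>)/2\<close>, where \<open>\<gamma>\<close>, \<open>\<eta>\<close> are
  its fractions on \<open>R\<^sup>0\<^sup>0\<close> and \<open>R\<^sup>1\<^sup>1\<close> and \<open>u = \<delta>\<^sup>1\<^sup>/\<^sup>4\<close>. Since \<open>R\<^sup>0\<^sup>0\<close> is almost free of 1-inputs,
  the LP solution covers at most a \<open>2\<surd>\<delta>\<close> fraction of it, and at most all of \<open>R\<^sup>1\<^sup>1\<close>.
  Splitting the rectangles according to which off-diagonal fraction is larger, one of the two
  classes carries at most half of the weight D, and the rectangles outside it cover only an
  \<open>O(u)\<close> fraction of the corresponding off-diagonal block. Keeping that class alone is then an
  LP solution on this block, unless 1-inputs are rare in the block.\<close>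

lemma cov_eq_sum_if: "cov w p = (\<Sum>R\<in>UNIV. if p \<in> rect R then w R else 0)"
  unfolding cov_def by (simp add: sum.inter_filter[symmetric])

lemma cov_nonneg: "\<forall>R. 0 \<le> w R \<Longrightarrow> 0 \<le> cov w p"
  unfolding cov_def by (rule sum_nonneg) blast

lemma sum_mult_cov_eq:
  fixes w :: "'x::finite set \<times> 'y::finite set \<Rightarrow> real"
  shows "(\<Sum>p\<in>S. \<mu> p * cov w p) = (\<Sum>R\<in>UNIV. w R * msr \<mu> (rect R \<inter> S))"
proof -
  have "(\<Sum>p\<in>S. \<mu> p * cov w p) = (\<Sum>p\<in>S. \<Sum>R\<in>UNIV. w R * (if p \<in> rect R then \<mu> p else 0))"
    unfolding cov_eq_sum_if sum_distrib_left by (intro sum.cong) auto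
  also have "\<dots> = (\<Sum>R\<in>UNIV. w R * (\<Sum>p\<in>S. if p \<in> rect R then \<mu> p else 0))"
    by (simp add: sum.swap[of _ S] sum_distrib_left)
  also have "\<dots> = (\<Sum>R\<in>UNIV. w R * msr \<mu> (rect R \<inter> S))"
    unfolding msr_def by (simp add: Int_commute sum.inter_restrict)
  finally show ?thesis .
qed

definition weights_on :: "('a \<Rightarrow> bool) \<Rightarrow> ('a \<Rightarrow> real) \<Rightarrow> 'a \<Rightarrow> real" where
  "weights_on K w R = (if K R then w R else 0)"

lemma weights_on_nonneg: "\<forall>R. 0 \<le> w R \<Longrightarrow> \<forall>R. 0 \<le> weights_on K w R"
  unfolding weights_on_def by simp

lemma sum_weights_on_add:
  "(\<Sum>R\<in>A. weights_on K w R * c R) + (\<Sum>R\<in>A. weights_on (\<lambda>R. \<not> K R) w R * c R) = (\<Sum>R\<in>A. w R * c R)"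
  unfolding weights_on_def by (simp add: sum.distrib[symmetric]) (rule sum.cong; simp)

lemma cov_weights_on_add: "cov (weights_on K w) p + cov (weights_on (\<lambda>R. \<not> K R) w) p = cov w p"
  using sum_weights_on_add[where A="{R. p \<in> rect R}" and c="\<lambda>_. 1"] unfolding cov_def by simp

lemma cov_weights_on_le:
  assumes "\<forall>R. 0 \<le> w R" shows "cov (weights_on K w) p \<le> cov w p"
  using cov_weights_on_add[of K w p] cov_nonneg[OF weights_on_nonneg[OF assms], of "\<lambda>R. \<not> K R" p] by linarith

lemma msr_nonneg: "\<forall>p. 0 \<le> \<mu> p \<Longrightarrow> 0 \<le> msr \<mu> S"
  unfolding msr_def by (rule sum_nonneg) blast

lemma muz_nonneg: "\<forall>p. 0 \<le> \<mu> p \<Longrightarrow> 0 \<le> muz \<mu> f z S"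
  unfolding muz_def by (rule sum_nonneg) blast

lemma msr_mono: "\<forall>p. 0 \<le> \<mu> p \<Longrightarrow> A \<subseteq> B \<Longrightarrow> msr \<mu> (A::('x::finite \<times> 'y::finite) set) \<le> msr \<mu> B"
  unfolding msr_def by (rule sum_mono2) auto

lemma sum_split_01:
  assumes "\<forall>p. f p \<in> {0, 1 :: nat}" and "finite S"
  shows "(\<Sum>p\<in>S. g p) = (\<Sum>p\<in>S \<inter> f -` {1}. g p) + (\<Sum>p\<in>S \<inter> f -` {0}. g p)"
proof -
  have "S = S \<inter> f -` {1} \<union> S \<inter> f -` {0}" using assms(1) by auto
  then have "(\<Sum>p\<in>S. g p) = (\<Sum>p\<in>S \<inter> f -` {1} \<union> S \<inter> f -` {0}. g p)" by simp
  also have "\<dots> = (\<Sum>p\<in>S \<inter> f -` {1}. g p) + (\<Sum>p\<in>S \<inter> f -` {0}. g p)"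
    using assms(2) by (intro sum.union_disjoint) auto
  finally show ?thesis .
qed

lemma msr_eq_muz_add:
  fixes f :: "'x::finite \<times> 'y::finite \<Rightarrow> nat"
  assumes "\<forall>p. f p \<in> {0, 1}"
  shows "msr \<mu> S = muz \<mu> f 1 S + muz \<mu> f 0 S"
  unfolding msr_def muz_def by (rule sum_split_01[OF assms finite])

lemma muz_restr: "muz (restr \<mu> S) f z UNIV = muz \<mu> f z S"
  unfolding muz_def restr_def by (simp add: sum.inter_restrict[symmetric] Int_commute)

lemma msr_Times:
  assumes "\<forall>x y. \<mu> (x, y) = \<mu>X x * \<mu>Y y"
  shows "msr \<mu> (A \<times> B) = (\<Sum>x\<in>A. \<mu>X x) * (\<Sum>y\<in>B. \<mu>Y y)"
  unfolding msr_def sum_product sum.cartesian_product by (rule sum.cong) (auto simp: assms)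

lemma msr_rect_Int_blk_cross:
  assumes "\<forall>x y. \<mu> (x, y) = \<mu>X x * \<mu>Y y"
  shows "msr \<mu> (rect R \<inter> blk X0 Y0 0 0) * msr \<mu> (rect R \<inter> blk X0 Y0 1 1)
       = msr \<mu> (rect R \<inter> blk X0 Y0 0 1) * msr \<mu> (rect R \<inter> blk X0 Y0 1 0)"
proof -
  have "rect R \<inter> blk X0 Y0 i j
      = (fst R \<inter> (if i = 0 then X0 else - X0)) \<times> (snd R \<inter> (if j = 0 then Y0 else - Y0))" for i j
    unfolding rect_def blk_def by auto
  then show ?thesis by (simp add: msr_Times[OF assms])
qed

lemma srec_le_feasible:
  fixes f :: "'x::finite \<times> 'y::finite \<Rightarrow> nat"
  assumes "srec_feasible f z \<mu> \<epsilon> \<delta> v"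
  shows "srec f z \<mu> \<epsilon> \<delta> \<le> (\<Sum>R\<in>UNIV. v R)"
  unfolding srec_def
proof (rule cInf_lower)
  show "(\<Sum>R\<in>UNIV. v R) \<in> {\<Sum>R\<in>UNIV. w R |w. srec_feasible f z \<mu> \<epsilon> \<delta> w}" using assms by blast
  show "bdd_below {\<Sum>R\<in>UNIV. w R |w. srec_feasible f z \<mu> \<epsilon> \<delta> w}"
    by (rule bdd_belowI[of _ 0]) (auto simp: srec_feasible_def intro: sum_nonneg)
qed

lemma sum_mult_cov_le_msr:
  assumes "srec_feasible f z \<mu> \<epsilon> \<delta> w" and "\<forall>p. 0 \<le> \<mu> p"
  shows "(\<Sum>p\<in>S. \<mu> p * cov w p) \<le> msr \<mu> S"
  unfolding msr_def
proof (rule sum_mono)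
  fix p
  have "cov w p \<le> 1" using assms(1) unfolding srec_feasible_def by blast
  then show "\<mu> p * cov w p \<le> \<mu> p" using assms(2)[rule_format, of p] by (simp add: mult_left_le)
qed

lemma sum_mult_cov_le_muz:
  fixes f :: "'x::finite \<times> 'y::finite \<Rightarrow> nat"
  assumes feas: "srec_feasible f 1 \<mu> \<epsilon> \<delta> w" and mu_nn: "\<forall>p. 0 \<le> \<mu> p" and f01: "\<forall>p. f p \<in> {0, 1}"
  shows "(\<Sum>p\<in>S. \<mu> p * cov w p) \<le> muz \<mu> f 1 S + \<delta> * muz \<mu> f 0 S"
proof -
  have "(\<Sum>p\<in>S. \<mu> p * cov w p) = (\<Sum>p\<in>S \<inter> f -` {1}. \<mu> p * cov w p) + (\<Sum>p\<in>S \<inter> f -` {0}. \<mu> p * cov w p)"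
    by (rule sum_split_01[OF f01 finite])
  also have "\<dots> \<le> muz \<mu> f 1 S + \<delta> * muz \<mu> f 0 S"
  proof (rule add_mono)
    show "(\<Sum>p\<in>S \<inter> f -` {1}. \<mu> p * cov w p) \<le> muz \<mu> f 1 S"
      using sum_mult_cov_le_msr[OF feas mu_nn] unfolding muz_def msr_def .
    have "\<mu> p * cov w p \<le> \<delta> * \<mu> p" if "f p = 0" for p
    proof -
      have "f p \<noteq> 1" using that by simp
      then have "cov w p \<le> \<delta>" using feas unfolding srec_feasible_def by blast
      then show ?thesis using mu_nn[rule_format, of p] mult_left_mono by (metis mult.commute)
    qed
    then show "(\<Sum>p\<in>S \<inter> f -` {0}. \<mu> p * cov w p) \<le> \<delta> * muz \<mu> f 0 S"
      unfolding muz_def sum_distrib_left by (intro sum_mono) (auto simp: Int_commute)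
  qed
  finally show ?thesis .
qed

lemma sum_mult_cov_le_sqrt:
  fixes f :: "'x::finite \<times> 'y::finite \<Rightarrow> nat"
  assumes feas: "srec_feasible f 1 \<mu> \<epsilon> \<delta> w" and mu_nn: "\<forall>p. 0 \<le> \<mu> p" and f01: "\<forall>p. f p \<in> {0, 1}"
    and delta: "0 < \<delta>" "\<delta> < 1" and sparse: "muz \<mu> f 1 S \<le> sqrt \<delta> * muz \<mu> f 0 S"
  shows "(\<Sum>p\<in>S. \<mu> p * cov w p) \<le> 2 * sqrt \<delta> * msr \<mu> S"
proof -
  have "\<delta> * \<delta> \<le> \<delta>" using delta by (simp add: mult_left_le)
  then have "\<delta> \<le> sqrt \<delta>" by (simp add: real_le_rsqrt power2_eq_square)
  then have "\<delta> * muz \<mu> f 0 S \<le> sqrt \<delta> * muz \<mu> f 0 S" by (rule mult_right_mono) (rule muz_nonneg[OF mu_nn])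
  moreover have "muz \<mu> f 0 S \<le> msr \<mu> S"
    using msr_eq_muz_add[OF f01] muz_nonneg[OF mu_nn] by (metis le_add_same_cancel2)
  then have "sqrt \<delta> * muz \<mu> f 0 S \<le> sqrt \<delta> * msr \<mu> S" by (rule mult_left_mono) (use delta in simp)
  ultimately show ?thesis using sum_mult_cov_le_muz[OF feas mu_nn f01, of S] sparse by linarith
qed

lemma srec_feasible_restr_weights_on:
  fixes f :: "'x::finite \<times> 'y::finite \<Rightarrow> nat" and w :: "'x set \<times> 'y set \<Rightarrow> real"
  assumes feas: "srec_feasible f 1 \<mu> \<epsilon> \<delta> w" and mu_nn: "\<forall>p. 0 \<le> \<mu> p"
    and ones: "muz \<mu> f 1 S > 0"
    and loss: "(\<Sum>R\<in>UNIV. weights_on (\<lambda>R. \<not> K R) w R * msr \<mu> (rect R \<inter> S)) \<le> c * muz \<mu> f 1 S"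
  shows "srec_feasible f 1 (restr \<mu> S) (eps_blk f \<mu> w S + c) \<delta> (weights_on K w)"
proof -
  have wnn: "\<forall>R. 0 \<le> w R" using feas unfolding srec_feasible_def by blast
  have le: "cov (weights_on K w) p \<le> cov w p" for p by (rule cov_weights_on_le[OF wnn])
  let ?S1 = "f -` {1} \<inter> S"
  have "(\<Sum>p\<in>?S1. \<mu> p * cov (weights_on (\<lambda>R. \<not> K R) w) p)
      = (\<Sum>R\<in>UNIV. weights_on (\<lambda>R. \<not> K R) w R * msr \<mu> (rect R \<inter> ?S1))"
    by (rule sum_mult_cov_eq)
  also have "\<dots> \<le> (\<Sum>R\<in>UNIV. weights_on (\<lambda>R. \<not> K R) w R * msr \<mu> (rect R \<inter> S))"
    using weights_on_nonneg[OF wnn] by (intro sum_mono mult_left_mono msr_mono[OF mu_nn]) auto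
  finally have "(\<Sum>p\<in>?S1. \<mu> p * cov (weights_on (\<lambda>R. \<not> K R) w) p) \<le> c * muz \<mu> f 1 S"
    using loss by linarith
  moreover have "(\<Sum>p\<in>?S1. \<mu> p * cov (weights_on K w) p)
      + (\<Sum>p\<in>?S1. \<mu> p * cov (weights_on (\<lambda>R. \<not> K R) w) p) = (\<Sum>p\<in>?S1. \<mu> p * cov w p)"
    by (simp add: sum.distrib[symmetric] distrib_left[symmetric] cov_weights_on_add)
  moreover have "(\<Sum>p\<in>f -` {1}. restr \<mu> S p * cov (weights_on K w) p) = (\<Sum>p\<in>?S1. \<mu> p * cov (weights_on K w) p)"
    unfolding restr_def by (simp add: sum.inter_restrict) (rule sum.cong; simp)
  moreover have "(1 - (eps_blk f \<mu> w S + c)) * muz (restr \<mu> S) f 1 UNIV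
      = (\<Sum>p\<in>?S1. \<mu> p * cov w p) - c * muz \<mu> f 1 S"
    unfolding muz_restr eps_blk_def using ones by (simp add: field_simps)
  ultimately have "(1 - (eps_blk f \<mu> w S + c)) * muz (restr \<mu> S) f 1 UNIV
      \<le> (\<Sum>p\<in>f -` {1}. restr \<mu> S p * cov (weights_on K w) p)"
    by linarith
  then show ?thesis
    using feas weights_on_nonneg[OF wnn] le order_trans unfolding srec_feasible_def by blast
qed

lemma le_arith_mean_if_mult_eq:
  fixes a b g h u :: real
  assumes "0 \<le> a" "a \<le> b" "a * b = g * h" "0 \<le> g" "0 \<le> h" "0 < u"
  shows "a \<le> (g / u + u * h) / 2"
proof -
  have "a * a \<le> a * b" using assms(1,2) by (simp add: mult_left_mono)
  then have "a \<le> sqrt ((g / u) * (u * h))" using assms(3,6) by (simp add: real_le_rsqrt power2_eq_square)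
  also have "\<dots> \<le> (g / u + u * h) / 2" using assms(4-6) by (intro arith_geo_mean_sqrt) auto
  finally show ?thesis .
qed

lemma sum_weights_on_mult_le:
  fixes w a b g h :: "'r::finite \<Rightarrow> real"
  assumes wnn: "\<forall>R. 0 \<le> w R" and "\<forall>R. 0 \<le> a R" and gnn: "\<forall>R. 0 \<le> g R" and hnn: "\<forall>R. 0 \<le> h R"
    and "\<forall>R. P R \<longrightarrow> a R \<le> b R" and "\<forall>R. a R * b R = g R * h R" and u: "0 < u"
    and G: "(\<Sum>R\<in>UNIV. w R * g R) \<le> 2 * u\<^sup>2" and H: "(\<Sum>R\<in>UNIV. w R * h R) \<le> 1"
  shows "(\<Sum>R\<in>UNIV. weights_on P w R * a R) \<le> 3/2 * u"
proof -
  have "weights_on P w R * a R \<le> w R * g R / (2 * u) + u / 2 * (w R * h R)" for R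
  proof (cases "P R")
    case True
    then have "a R \<le> (g R / u + u * h R) / 2" using le_arith_mean_if_mult_eq assms by blast
    then have "w R * a R \<le> w R * ((g R / u + u * h R) / 2)" by (rule mult_left_mono) (use wnn in auto)
    then show ?thesis using True u by (simp add: weights_on_def field_simps)
  qed (use wnn gnn hnn u in \<open>simp add: weights_on_def\<close>)
  then have "(\<Sum>R\<in>UNIV. weights_on P w R * a R)
      \<le> (\<Sum>R\<in>UNIV. w R * g R) / (2 * u) + u / 2 * (\<Sum>R\<in>UNIV. w R * h R)"
    by (simp add: sum_mono sum.distrib[symmetric] sum_divide_distrib sum_distrib_left)
  also have "\<dots> \<le> 2 * u\<^sup>2 / (2 * u) + u / 2"
    using G H u by (intro add_mono divide_right_mono) (auto simp: mult_left_le)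
  also have "\<dots> = 3/2 * u" using u by (simp add: power2_eq_square)
  finally show ?thesis .
qed

text \<open>Here a, b are the masses of a rectangle on the two off-diagonal blocks and g, h those on the
  diagonal blocks, with block masses A, B, G, H.\<close>

lemma exists_light_weights_on_small_loss:
  fixes w a b g h :: "'r::finite \<Rightarrow> real"
  assumes wnn: "\<forall>R. 0 \<le> w R" and nn: "\<forall>R. 0 \<le> a R \<and> 0 \<le> b R \<and> 0 \<le> g R \<and> 0 \<le> h R"
    and pos: "0 < A" "0 < B" "0 < G" "0 < H" and u: "0 < u"
    and cross: "\<forall>R. a R * b R = g R * h R" "A * B = G * H"
    and G: "(\<Sum>R\<in>UNIV. w R * g R) \<le> 2 * u\<^sup>2 * G" and H: "(\<Sum>R\<in>UNIV. w R * h R) \<le> H"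
  obtains K where "2 * (\<Sum>R\<in>UNIV. weights_on K w R) \<le> (\<Sum>R\<in>UNIV. w R)"
      "(\<Sum>R\<in>UNIV. weights_on (\<lambda>R. \<not> K R) w R * a R) \<le> 3/2 * u * A"
  | K where "2 * (\<Sum>R\<in>UNIV. weights_on K w R) \<le> (\<Sum>R\<in>UNIV. w R)"
      "(\<Sum>R\<in>UNIV. weights_on (\<lambda>R. \<not> K R) w R * b R) \<le> 3/2 * u * B"
proof -
  have div: "(\<Sum>R\<in>UNIV. v R * (c R / C)) = (\<Sum>R\<in>UNIV. v R * c R) / C" for v c :: "'r \<Rightarrow> real" and C
    by (simp add: sum_divide_distrib)
  have cross': "\<forall>R. (a R / A) * (b R / B) = (g R / G) * (h R / H)"
    using cross pos by (simp add: field_simps)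
  have G': "(\<Sum>R\<in>UNIV. w R * (g R / G)) \<le> 2 * u\<^sup>2"
    unfolding div using G pos by (simp add: pos_divide_le_eq)
  have H': "(\<Sum>R\<in>UNIV. w R * (h R / H)) \<le> 1"
    unfolding div using H pos by (simp add: pos_divide_le_eq)
  define K where "K R \<longleftrightarrow> b R / B < a R / A" for R
  have "(\<Sum>R\<in>UNIV. weights_on (\<lambda>R. \<not> K R) w R * (a R / A)) \<le> 3/2 * u"
    using nn pos cross' unfolding K_def
    by (intro sum_weights_on_mult_le[OF wnn _ _ _ _ _ u G' H', where b="\<lambda>R. b R / B"]) auto
  then have La: "(\<Sum>R\<in>UNIV. weights_on (\<lambda>R. \<not> K R) w R * a R) \<le> 3/2 * u * A"
    unfolding div using pos by (simp add: pos_divide_le_eq)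
  have "(\<Sum>R\<in>UNIV. weights_on K w R * (b R / B)) \<le> 3/2 * u"
    using nn pos cross' unfolding K_def
    by (intro sum_weights_on_mult_le[OF wnn _ _ _ _ _ u G' H', where b="\<lambda>R. a R / A"]) (auto simp: mult.commute)
  then have Lb: "(\<Sum>R\<in>UNIV. weights_on (\<lambda>R. \<not> \<not> K R) w R * b R) \<le> 3/2 * u * B"
    unfolding div using pos by (simp add: pos_divide_le_eq)
  have total: "(\<Sum>R\<in>UNIV. weights_on K w R) + (\<Sum>R\<in>UNIV. weights_on (\<lambda>R. \<not> K R) w R) = (\<Sum>R\<in>UNIV. w R)"
    using sum_weights_on_add[where A=UNIV and c="\<lambda>_. 1"] by simp
  show ?thesis
  proof (cases "(\<Sum>R\<in>UNIV. weights_on K w R) \<le> (\<Sum>R\<in>UNIV. weights_on (\<lambda>R. \<not> K R) w R)")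
    case True
    then show ?thesis using La total that(1)[of K] by linarith
  next
    case False
    then show ?thesis using Lb total that(2)[of "\<lambda>R. \<not> K R"] by linarith
  qed
qed

lemma block_dichotomy:
  fixes f :: "'x::finite \<times> 'y::finite \<Rightarrow> nat" and w :: "'x set \<times> 'y set \<Rightarrow> real"
  assumes feas: "srec_feasible f 1 \<mu> \<epsilon> \<delta> w" and mu_nn: "\<forall>p. 0 \<le> \<mu> p" and f01: "\<forall>p. f p \<in> {0, 1}"
    and u: "0 < u" and light: "(\<Sum>R\<in>UNIV. weights_on K w R) \<le> 0.9 * D"
    and loss: "(\<Sum>R\<in>UNIV. weights_on (\<lambda>R. \<not> K R) w R * msr \<mu> (rect R \<inter> S)) \<le> 3/2 * u * msr \<mu> S"
  shows "2 * muz (restr \<mu> S) f 1 UNIV \<le> muz (restr \<mu> S) f 0 UNIV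
    \<or> (muz \<mu> f 1 S > 0 \<and> srec f 1 (restr \<mu> S) (eps_blk f \<mu> w S + 30 * u) \<delta> \<le> 0.9 * D)"
proof (cases "muz \<mu> f 0 S < 2 * muz \<mu> f 1 S")
  case False
  then show ?thesis by (simp add: muz_restr)
next
  case dense: True
  then have ones: "muz \<mu> f 1 S > 0" using muz_nonneg[OF mu_nn, of f 0 S] by linarith
  have "msr \<mu> S \<le> 3 * muz \<mu> f 1 S" using msr_eq_muz_add[OF f01, of \<mu> S] dense by linarith
  then have "3/2 * u * msr \<mu> S \<le> 30 * u * muz \<mu> f 1 S" using u ones by (simp add: mult_left_mono)
  then have "srec_feasible f 1 (restr \<mu> S) (eps_blk f \<mu> w S + 30 * u) \<delta> (weights_on K w)"
    using loss by (intro srec_feasible_restr_weights_on[OF feas mu_nn ones]) linarith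
  then show ?thesis using ones light srec_le_feasible by fastforce
qed

theorem mainTheorem6:
  fixes f :: "'x::finite \<times> 'y::finite \<Rightarrow> nat"
    and \<mu> :: "'x \<times> 'y \<Rightarrow> real" and \<mu>X :: "'x \<Rightarrow> real" and \<mu>Y :: "'y \<Rightarrow> real"
    and \<epsilon> \<delta> D :: real and w :: "'x set \<times> 'y set \<Rightarrow> real"
    and X0 :: "'x set" and Y0 :: "'y set"
  assumes f01: "\<forall>p. f p \<in> {0, 1}"
    and prod: "\<forall>x y. \<mu> (x, y) = \<mu>X x * \<mu>Y y"
    and mu_range: "\<forall>p. 0 \<le> \<mu> p \<and> \<mu> p \<le> 1"
    and eps: "0 < \<epsilon>" "\<epsilon> < 1"
    and delta: "0 < \<delta>" "\<delta> < 1"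
    and feas: "srec_feasible f 1 \<mu> \<epsilon> \<delta> w"
    and opt: "(\<Sum>R\<in>UNIV. w R) = srec f 1 \<mu> \<epsilon> \<delta>"
    and D_def: "D = (\<Sum>R\<in>UNIV. w R)"
    and D_pos: "D > 0"
    and blk_pos: "\<forall>i\<in>{0,1}. \<forall>j\<in>{0,1}. msr \<mu> (blk X0 Y0 i j) > 0"
    and R00: "muz \<mu> f 1 (blk X0 Y0 0 0) \<le> sqrt \<delta> * muz \<mu> f 0 (blk X0 Y0 0 0)"
  shows "\<exists>(i, j)\<in>{(0, 1), (1, 0)}.
           2 * muz (restr \<mu> (blk X0 Y0 i j)) f 1 UNIV \<le> muz (restr \<mu> (blk X0 Y0 i j)) f 0 UNIV
         \<or> (muz \<mu> f 1 (blk X0 Y0 i j) > 0 \<and>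
            srec f 1 (restr \<mu> (blk X0 Y0 i j))
                 (eps_blk f \<mu> w (blk X0 Y0 i j) + 30 * \<delta> powr (1/4)) \<delta> \<le> 0.9 * D)"
proof -
  have mu_nn: "\<forall>p. 0 \<le> \<mu> p" using mu_range by blast
  have wnn: "\<forall>R. 0 \<le> w R" using feas unfolding srec_feasible_def by blast
  define m where "m i j R = msr \<mu> (rect R \<inter> blk X0 Y0 i j)" for i j R
  define M where "M i j = msr \<mu> (blk X0 Y0 i j)" for i j
  define u where "u = \<delta> powr (1/4)"
  have u: "0 < u" "u\<^sup>2 = sqrt \<delta>"
    unfolding u_def using delta by (simp_all add: powr_power powr_half_sqrt[symmetric])
  have nn: "\<forall>R. 0 \<le> m 0 1 R \<and> 0 \<le> m 1 0 R \<and> 0 \<le> m 0 0 R \<and> 0 \<le> m 1 1 R"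
    unfolding m_def using msr_nonneg[OF mu_nn] by blast
  have pos: "0 < M 0 1" "0 < M 1 0" "0 < M 0 0" "0 < M 1 1" using blk_pos unfolding M_def by auto
  have cross: "\<forall>R. m 0 1 R * m 1 0 R = m 0 0 R * m 1 1 R" "M 0 1 * M 1 0 = M 0 0 * M 1 1"
    using msr_rect_Int_blk_cross[OF prod, of _ X0 Y0] unfolding m_def M_def
    by (simp, metis (no_types) rect_def fst_conv snd_conv UNIV_Times_UNIV Int_UNIV_left)
  have G: "(\<Sum>R\<in>UNIV. w R * m 0 0 R) \<le> 2 * u\<^sup>2 * M 0 0"
    using sum_mult_cov_le_sqrt[OF feas mu_nn f01 delta R00]
    unfolding m_def M_def u(2) sum_mult_cov_eq[symmetric] .
  have H: "(\<Sum>R\<in>UNIV. w R * m 1 1 R) \<le> M 1 1"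
    using sum_mult_cov_le_msr[OF feas mu_nn] unfolding m_def M_def sum_mult_cov_eq[symmetric] .
  obtain K i j where ij: "(i, j) \<in> {(0, 1), (1, 0)}" and half: "2 * (\<Sum>R\<in>UNIV. weights_on K w R) \<le> D"
    and loss: "(\<Sum>R\<in>UNIV. weights_on (\<lambda>R. \<not> K R) w R * m i j R) \<le> 3/2 * u * M i j"
    by (rule exists_light_weights_on_small_loss[OF wnn nn pos u(1) cross G H]) (auto simp: D_def)
  have "(\<Sum>R\<in>UNIV. weights_on K w R) \<le> 0.9 * D" using half D_pos by linarith
  from block_dichotomy[OF feas mu_nn f01 u(1) this loss[unfolded m_def M_def]] ij
  show ?thesis unfolding u_def by blast
qed

end
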